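(* Let $\Gamma_1,\Gamma_2$ be finite connected graphs, each having $1$ as an eigenvalue of its normalized Laplacian, with eigenfunctions $f^1$ on $\Gamma_1$ and $f^2$ on $\Gamma_2$. Assume $f^1(p_1)=f^2(p_2)$ for some vertices $p_1\in\Gamma_1$, $p_2\in\Gamma_2$. Let $\Gamma$ be the graph obtained from the disjoint union of $\Gamma_1$ and $\Gamma_2$ by identifying $p_1$ with $p_2$. Then $1$ is an eigenvalue of the normalized Laplacian of $\Gamma$, with an eigenfunction equal to $f^1$ on $\Gamma_1$ and to $f^2$ on $\Gamma_2$.
   Context: For a finite simple graph without isolated vertices, write $i\sim j$ for adjacency and $n_i$ for the degree of $i$. The normalized Laplacian acts on real functions $v$ on the vertices by $\Delta v(i)=v(i)-\frac{1}{n_i}\sum_{j\sim i}v(j)$; $\lambda$ is an eigenvalue with eigenfunction $u$ if $u\not\equiv 0$ and $\frac{1}{n_i}\sum_{j\sim i}u(j)=(1-\lambda)u(i)$ for all $i$. For $\lambda=1$ this says $\sum_{j\sim i}u(j)=0$ for all $i$. *)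

theory Defs
  imports Complex_Main
begin

definition simple_graph :: "'a set \<Rightarrow> ('a \<Rightarrow> 'a \<Rightarrow> bool) \<Rightarrow> bool" where
  "simple_graph V E \<longleftrightarrow> finite V \<and> (\<forall>x y. E x y \<longrightarrow> x \<in> V \<and> y \<in> V)
     \<and> (\<forall>x y. E x y \<longrightarrow> E y x) \<and> (\<forall>x. \<not> E x x) \<and> (\<forall>x\<in>V. \<exists>y. E x y)"

definition connected_graph :: "'a set \<Rightarrow> ('a \<Rightarrow> 'a \<Rightarrow> bool) \<Rightarrow> bool" where
  "connected_graph V E \<longleftrightarrow> simple_graph V E \<and> (\<forall>x\<in>V. \<forall>y\<in>V. E\<^sup>*\<^sup>* x y)"

definition nbrs :: "'a set \<Rightarrow> ('a \<Rightarrow> 'a \<Rightarrow> bool) \<Rightarrow> 'a \<Rightarrow> 'a set" where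
  "nbrs V E i = {j \<in> V. E i j}"

definition degree :: "'a set \<Rightarrow> ('a \<Rightarrow> 'a \<Rightarrow> bool) \<Rightarrow> 'a \<Rightarrow> nat" where
  "degree V E i = card (nbrs V E i)"

definition eigenfunction :: "'a set \<Rightarrow> ('a \<Rightarrow> 'a \<Rightarrow> bool) \<Rightarrow> real \<Rightarrow> ('a \<Rightarrow> real) \<Rightarrow> bool" where
  "eigenfunction V E lam u \<longleftrightarrow> (\<exists>x\<in>V. u x \<noteq> 0) \<and>
     (\<forall>i\<in>V. (\<Sum>j\<in>nbrs V E i. u j) / real (degree V E i) = (1 - lam) * u i)"

definition eigenvalue :: "'a set \<Rightarrow> ('a \<Rightarrow> 'a \<Rightarrow> bool) \<Rightarrow> real \<Rightarrow> bool" where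
  "eigenvalue V E lam \<longleftrightarrow> (\<exists>u. eigenfunction V E lam u)"

text \<open>Gluing: disjoint union (Inl = copy of Gamma1, Inr = copy of Gamma2) with p2 identified
with p1; the glued vertex is represented by Inl p1.\<close>
definition glue_V :: "'a set \<Rightarrow> 'b set \<Rightarrow> 'b \<Rightarrow> ('a + 'b) set" where
  "glue_V V1 V2 p2 = Inl ` V1 \<union> Inr ` (V2 - {p2})"

definition glue_E :: "('a \<Rightarrow> 'a \<Rightarrow> bool) \<Rightarrow> ('b \<Rightarrow> 'b \<Rightarrow> bool) \<Rightarrow> 'a \<Rightarrow> 'b
    \<Rightarrow> ('a + 'b) \<Rightarrow> ('a + 'b) \<Rightarrow> bool" where
  "glue_E E1 E2 p1 p2 a b = (case (a, b) of
       (Inl x, Inl y) \<Rightarrow> E1 x y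
     | (Inr x, Inr y) \<Rightarrow> x \<noteq> p2 \<and> y \<noteq> p2 \<and> E2 x y
     | (Inl x, Inr y) \<Rightarrow> x = p1 \<and> y \<noteq> p2 \<and> E2 p2 y
     | (Inr x, Inl y) \<Rightarrow> y = p1 \<and> x \<noteq> p2 \<and> E2 x p2)"

definition glue_fun :: "('a \<Rightarrow> real) \<Rightarrow> ('b \<Rightarrow> real) \<Rightarrow> ('a + 'b) \<Rightarrow> real" where
  "glue_fun f1 f2 v = (case v of Inl x \<Rightarrow> f1 x | Inr y \<Rightarrow> f2 y)"

end

theory Submission
  imports Defs
begin

text \<open>For eigenvalue 1 the eigen-equation says that the sum of u over the neighbours of every
vertex vanishes. In the glued graph the neighbours of a vertex of \<open>\<Gamma>2 - p2\<close> are its old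
neighbours, with p2 renamed to p1 (harmless because f1 p1 = f2 p2), and the neighbours of
the glued vertex are the union of its neighbours in both graphs, so each of these sums is a sum
of vanishing sums.\<close>

lemma eigenfunction_one_iff:
  "eigenfunction V E 1 u \<longleftrightarrow> (\<exists>x\<in>V. u x \<noteq> 0) \<and> (\<forall>i\<in>V. (\<Sum>j\<in>nbrs V E i. u j) = 0)"
proof -
  \<comment> \<open>No hypothesis needed: card A = 0 forces A to be empty or infinite, and then the sum is 0.\<close>
  have "(\<Sum>j\<in>A. u j) / real (card A) = 0 \<longleftrightarrow> (\<Sum>j\<in>A. u j) = 0" for A :: "'a set"
    by (cases "finite A") auto
  then show ?thesis
    unfolding eigenfunction_def degree_def by simp
qed

lemma nbrs_glue_Inl:
  assumes "simple_graph V1 E1" and "simple_graph V2 E2"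
  shows "nbrs (glue_V V1 V2 p2) (glue_E E1 E2 p1 p2) (Inl x)
    = Inl ` nbrs V1 E1 x \<union> (if x = p1 then Inr ` nbrs V2 E2 p2 else {})"
proof (rule set_eqI)
  fix z
  show "z \<in> nbrs (glue_V V1 V2 p2) (glue_E E1 E2 p1 p2) (Inl x)
    \<longleftrightarrow> z \<in> Inl ` nbrs V1 E1 x \<union> (if x = p1 then Inr ` nbrs V2 E2 p2 else {})"
    using assms unfolding simple_graph_def nbrs_def glue_V_def glue_E_def
    by (cases z) auto
qed

lemma nbrs_glue_Inr:
  assumes "simple_graph V1 E1" and "simple_graph V2 E2" and "p1 \<in> V1" and "x \<noteq> p2"
  shows "nbrs (glue_V V1 V2 p2) (glue_E E1 E2 p1 p2) (Inr x)
    = Inr ` (nbrs V2 E2 x - {p2}) \<union> (if E2 x p2 then {Inl p1} else {})"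
proof (rule set_eqI)
  fix z
  show "z \<in> nbrs (glue_V V1 V2 p2) (glue_E E1 E2 p1 p2) (Inr x)
    \<longleftrightarrow> z \<in> Inr ` (nbrs V2 E2 x - {p2}) \<union> (if E2 x p2 then {Inl p1} else {})"
    using assms unfolding simple_graph_def nbrs_def glue_V_def glue_E_def
    by (cases z) auto
qed

lemma finite_nbrs: "simple_graph V E \<Longrightarrow> finite (nbrs V E i)"
  unfolding simple_graph_def nbrs_def by auto

lemma glue_fun_sum_Inl: "(\<Sum>j\<in>Inl ` A. glue_fun f1 f2 j) = (\<Sum>j\<in>A. f1 j)"
  by (simp add: sum.reindex glue_fun_def)

lemma glue_fun_sum_Inr: "(\<Sum>j\<in>Inr ` B. glue_fun f1 f2 j) = (\<Sum>j\<in>B. f2 j)"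
  by (simp add: sum.reindex glue_fun_def)

lemma glue_nbrs_sum_Inl:
  assumes "simple_graph V1 E1" and "simple_graph V2 E2"
  shows "(\<Sum>j\<in>nbrs (glue_V V1 V2 p2) (glue_E E1 E2 p1 p2) (Inl x). glue_fun f1 f2 j)
    = (\<Sum>j\<in>nbrs V1 E1 x. f1 j) + (if x = p1 then (\<Sum>j\<in>nbrs V2 E2 p2. f2 j) else 0)"
proof (cases "x = p1")
  case True
  have "Inl ` nbrs V1 E1 x \<inter> Inr ` nbrs V2 E2 p2 = {}" by blast
  then show ?thesis
    using True finite_nbrs[OF assms(1)] finite_nbrs[OF assms(2)]
    by (simp add: nbrs_glue_Inl[OF assms] sum.union_disjoint glue_fun_sum_Inl glue_fun_sum_Inr)
next
  case False
  then show ?thesis by (simp add: nbrs_glue_Inl[OF assms] glue_fun_sum_Inl)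
qed

lemma glue_nbrs_sum_Inr:
  assumes "simple_graph V1 E1" and "simple_graph V2 E2" and "p1 \<in> V1" and "x \<noteq> p2"
    and "f1 p1 = f2 p2"
  shows "(\<Sum>j\<in>nbrs (glue_V V1 V2 p2) (glue_E E1 E2 p1 p2) (Inr x). glue_fun f1 f2 j)
    = (\<Sum>j\<in>nbrs V2 E2 x. f2 j)"
proof -
  have fin: "finite (nbrs V2 E2 x - {p2})"
    using finite_nbrs[OF assms(2)] by simp
  have "(\<Sum>j\<in>nbrs V2 E2 x. f2 j)
      = (\<Sum>j\<in>nbrs V2 E2 x - {p2}. f2 j) + (if E2 x p2 then f2 p2 else 0)"
  proof (cases "E2 x p2")
    case True
    then have "p2 \<in> nbrs V2 E2 x"
      using assms(2) unfolding simple_graph_def nbrs_def by auto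
    then show ?thesis
      using True finite_nbrs[OF assms(2)] by (simp add: sum.remove)
  next
    case False
    then have "nbrs V2 E2 x - {p2} = nbrs V2 E2 x" unfolding nbrs_def by auto
    then show ?thesis using False by simp
  qed
  moreover have "Inl p1 \<notin> Inr ` (nbrs V2 E2 x - {p2})" by blast
  moreover have "glue_fun f1 f2 (Inl p1) = f2 p2"
    using assms(5) by (simp add: glue_fun_def)
  ultimately show ?thesis
    using fin by (simp add: nbrs_glue_Inr[OF assms(1-4)] glue_fun_sum_Inr)
qed

theorem mainTheorem8:
  fixes V1 :: "'a set" and E1 :: "'a \<Rightarrow> 'a \<Rightarrow> bool"
    and V2 :: "'b set" and E2 :: "'b \<Rightarrow> 'b \<Rightarrow> bool"
    and f1 :: "'a \<Rightarrow> real" and f2 :: "'b \<Rightarrow> real" and p1 :: 'a and p2 :: 'b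
  assumes "connected_graph V1 E1" and "connected_graph V2 E2"
    and "eigenfunction V1 E1 1 f1" and "eigenfunction V2 E2 1 f2"
    and "p1 \<in> V1" and "p2 \<in> V2" and "f1 p1 = f2 p2"
  shows "eigenvalue (glue_V V1 V2 p2) (glue_E E1 E2 p1 p2) 1
    \<and> eigenfunction (glue_V V1 V2 p2) (glue_E E1 E2 p1 p2) 1 (glue_fun f1 f2)"
proof -
  have g1: "simple_graph V1 E1" and g2: "simple_graph V2 E2"
    using assms(1,2) unfolding connected_graph_def by auto
  obtain x where "x \<in> V1" "f1 x \<noteq> 0"
    using assms(3) unfolding eigenfunction_one_iff by auto
  then have nonzero: "\<exists>v\<in>glue_V V1 V2 p2. glue_fun f1 f2 v \<noteq> 0"
    by (intro bexI[of _ "Inl x"]) (auto simp: glue_V_def glue_fun_def)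
  have "(\<Sum>j\<in>nbrs (glue_V V1 V2 p2) (glue_E E1 E2 p1 p2) v. glue_fun f1 f2 j) = 0"
    if "v \<in> glue_V V1 V2 p2" for v
  proof -
    from that consider y where "v = Inl y" "y \<in> V1" | y where "v = Inr y" "y \<in> V2" "y \<noteq> p2"
      unfolding glue_V_def by blast
    then show ?thesis
    proof cases
      case 1
      then show ?thesis using assms(3-6) g1 g2
        by (simp add: eigenfunction_one_iff glue_nbrs_sum_Inl)
    next
      case 2
      then show ?thesis using assms(4,5,7) g1 g2
        by (simp add: eigenfunction_one_iff glue_nbrs_sum_Inr)
    qed
  qed
  with nonzero have "eigenfunction (glue_V V1 V2 p2) (glue_E E1 E2 p1 p2) 1 (glue_fun f1 f2)"
    unfolding eigenfunction_one_iff by blast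
  then show ?thesis unfolding eigenvalue_def by blast
qed

end
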